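(* Let $\mathcal{J}$ be a finite set, $\mathcal{J}_0=\mathcal{J}\cup\{0\}$, $(\Omega,P)$ a Borel probability space and $\mathcal{U}:\Omega\times\mathcal{J}_0\times\mathbb{R}\to\mathbb{R}$ satisfying the regularity and no-indifference assumptions in the context. Let $s,s'$ be probability vectors on $\mathcal{J}_0$ with $s\le s'$ (i.e. $s_j\le s'_j$ for all $j\in\mathcal{J}$). If $\delta\in\tilde\sigma^{-1}(s)$ and $\delta'\in\tilde\sigma^{-1}(s')$, then $\delta\wedge\delta'\in\tilde\sigma^{-1}(s)$ and $\delta\vee\delta'\in\tilde\sigma^{-1}(s')$, where $(\delta\wedge\delta')_j=\min\{\delta_j,\delta'_j\}$ and $(\delta\vee\delta')_j=\max\{\delta_j,\delta'_j\}$. That is, $s\mapsto\tilde\sigma^{-1}(s)$ is isotone in Veinott's strong set order.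
   Context: Assumption (regularity): for every $j\in\mathcal{J}_0$ and $\delta\in\mathbb{R}$ the map $\varepsilon\mapsto\mathcal{U}_{\varepsilon j}(\delta)$ is measurable, and for every $\varepsilon$, $j$ the map $\delta\mapsto\mathcal{U}_{\varepsilon j}(\delta)$ is increasing and continuous. Assumption (no indifference): for all distinct $j,j'\in\mathcal{J}_0$ and all $\delta,\delta'\in\mathbb{R}$, $P(\varepsilon:\mathcal{U}_{\varepsilon j}(\delta)=\mathcal{U}_{\varepsilon j'}(\delta'))=0$. For $\delta\in\mathbb{R}^{\mathcal{J}_0}$, $\sigma_j(\delta)=P(\varepsilon:\mathcal{U}_{\varepsilon j}(\delta_j)\ge\max_{j'\in\mathcal{J}_0}\mathcal{U}_{\varepsilon j'}(\delta_{j'}))$. For $\delta\in\mathbb{R}^{\mathcal{J}}$, $\tilde\sigma(\delta)=\sigma((0,\delta))$ (normalization $\delta_0=0$), and $\tilde\sigma^{-1}(s)=\{\delta\in\mathbb{R}^{\mathcal{J}}:\tilde\sigma(\delta)=s\}$. *)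

theory Defs
  imports "HOL-Probability.Probability"
begin

text \<open>Products are indexed by natural numbers; the finite product set is J
  (with 0 not in J) and the outside option is 0, so J0 = insert 0 J.
  U eps j d is the utility of product j at mean utility d in state eps.\<close>

definition choice_prob ::
  "'w measure \<Rightarrow> ('w \<Rightarrow> nat \<Rightarrow> real \<Rightarrow> real) \<Rightarrow> nat set \<Rightarrow> (nat \<Rightarrow> real) \<Rightarrow> nat \<Rightarrow> real"
  where "choice_prob M U J0 \<delta> j =
    measure M {\<epsilon> \<in> space M. U \<epsilon> j (\<delta> j) \<ge> Max ((\<lambda>j'. U \<epsilon> j' (\<delta> j')) ` J0)}"

definition choice_prob_tilde ::
  "'w measure \<Rightarrow> ('w \<Rightarrow> nat \<Rightarrow> real \<Rightarrow> real) \<Rightarrow> nat set \<Rightarrow> (nat \<Rightarrow> real) \<Rightarrow> nat \<Rightarrow> real"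
  where "choice_prob_tilde M U J \<delta> = choice_prob M U (insert 0 J) (\<delta>(0 := 0))"

definition choice_prob_tilde_inv ::
  "'w measure \<Rightarrow> ('w \<Rightarrow> nat \<Rightarrow> real \<Rightarrow> real) \<Rightarrow> nat set \<Rightarrow> (nat \<Rightarrow> real) \<Rightarrow> (nat \<Rightarrow> real) set"
  where "choice_prob_tilde_inv M U J s =
    {\<delta> \<in> J \<rightarrow>\<^sub>E (UNIV :: real set). \<forall>j \<in> insert 0 J. choice_prob_tilde M U J \<delta> j = s j}"

end

theory Submission
  imports Defs
begin

text \<open>Let \<open>E\<^sub>j(\<delta>)\<close> be the event that option \<open>j\<close> is (weakly) best at \<open>\<delta>\<close>. No indifference
  makes these events almost surely disjoint, and they cover the sample space, so the choice
  probabilities sum to one. By monotonicity of utilities, lowering the other options' mean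
  utilities while keeping \<open>\<delta>\<^sub>j\<close> fixed can only enlarge \<open>E\<^sub>j\<close>. At each \<open>j\<close> the pointwise
  minimum of \<open>\<delta>\<close> and \<open>\<delta>'\<close> agrees with one of them and lies below both, so its shares dominate
  \<open>s\<close> coordinatewise (using \<open>s \<le> s'\<close> where it agrees with \<open>\<delta>'\<close> only); as both sum to one they
  coincide. Dually, the shares of the pointwise maximum are dominated by \<open>s'\<close>.\<close>

definition choice_event ::
  "'w measure \<Rightarrow> ('w \<Rightarrow> nat \<Rightarrow> real \<Rightarrow> real) \<Rightarrow> nat set \<Rightarrow> (nat \<Rightarrow> real) \<Rightarrow> nat \<Rightarrow> 'w set"
  where "choice_event M U J0 \<delta> j = {\<epsilon> \<in> space M. \<forall>k\<in>J0. U \<epsilon> k (\<delta> k) \<le> U \<epsilon> j (\<delta> j)}"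

locale random_utility = prob_space M
  for M :: "'w measure" +
  fixes U :: "'w \<Rightarrow> nat \<Rightarrow> real \<Rightarrow> real"
    and J0 :: "nat set"
  assumes finite_choice_set: "finite J0"
    and choice_set_nonempty: "J0 \<noteq> {}"
    and utility_measurable: "\<And>j d. j \<in> J0 \<Longrightarrow> (\<lambda>\<epsilon>. U \<epsilon> j d) \<in> borel_measurable M"
    and no_indifference: "\<And>j j' d d'. j \<in> J0 \<Longrightarrow> j' \<in> J0 \<Longrightarrow> j \<noteq> j' \<Longrightarrow>
        measure M {\<epsilon> \<in> space M. U \<epsilon> j d = U \<epsilon> j' d'} = 0"
begin

lemma choice_prob_eq_measure_choice_event:
  "choice_prob M U J0 \<delta> j = measure M (choice_event M U J0 \<delta> j)"
  unfolding choice_prob_def choice_event_def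
  using finite_choice_set choice_set_nonempty by simp

lemma choice_event_sets: "j \<in> J0 \<Longrightarrow> choice_event M U J0 \<delta> j \<in> sets M"
  unfolding choice_event_def
  using finite_choice_set
  by (intro sets.sets_Collect_finite_All borel_measurable_le) (auto intro: utility_measurable)

lemma ties_null_sets:
  assumes "j \<in> J0" "j' \<in> J0" "j \<noteq> j'"
  shows "{\<epsilon> \<in> space M. U \<epsilon> j d = U \<epsilon> j' d'} \<in> null_sets M"
proof -
  have "{\<epsilon> \<in> space M. U \<epsilon> j d = U \<epsilon> j' d'} \<in> sets M"
    using assms by (intro borel_measurable_eq) (auto intro: utility_measurable)
  with no_indifference[OF assms] show ?thesis
    by (simp add: emeasure_eq_measure null_setsI)
qed

lemma AE_choice_events_disjoint:
  assumes "i \<in> J0" "j \<in> J0" "i \<noteq> j"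
  shows "AE \<epsilon> in M. \<epsilon> \<notin> choice_event M U J0 \<delta> i \<or> \<epsilon> \<notin> choice_event M U J0 \<delta> j"
proof (rule AE_I')
  show "{\<epsilon> \<in> space M. U \<epsilon> i (\<delta> i) = U \<epsilon> j (\<delta> j)} \<in> null_sets M"
    using assms by (rule ties_null_sets)
  show "{\<epsilon> \<in> space M. \<not> (\<epsilon> \<notin> choice_event M U J0 \<delta> i \<or> \<epsilon> \<notin> choice_event M U J0 \<delta> j)}
      \<subseteq> {\<epsilon> \<in> space M. U \<epsilon> i (\<delta> i) = U \<epsilon> j (\<delta> j)}"
    using assms by (auto simp: choice_event_def intro: antisym)
qed

lemma UN_choice_event: "(\<Union>j\<in>J0. choice_event M U J0 \<delta> j) = space M"
proof -
  have "\<exists>j\<in>J0. \<forall>k\<in>J0. U \<epsilon> k (\<delta> k) \<le> U \<epsilon> j (\<delta> j)" for \<epsilon>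
  proof -
    have "Max ((\<lambda>k. U \<epsilon> k (\<delta> k)) ` J0) \<in> (\<lambda>k. U \<epsilon> k (\<delta> k)) ` J0"
      using finite_choice_set choice_set_nonempty by (intro Max_in) auto
    then obtain j where "j \<in> J0" "U \<epsilon> j (\<delta> j) = Max ((\<lambda>k. U \<epsilon> k (\<delta> k)) ` J0)"
      by auto
    with finite_choice_set show ?thesis
      by (intro bexI[of _ j]) auto
  qed
  then show ?thesis
    by (auto simp: choice_event_def)
qed

lemma sum_choice_prob: "(\<Sum>j\<in>J0. choice_prob M U J0 \<delta> j) = 1"
proof -
  have "(\<Sum>j\<in>J0. choice_prob M U J0 \<delta> j) = measure M (\<Union>j\<in>J0. choice_event M U J0 \<delta> j)"
    unfolding choice_prob_eq_measure_choice_event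
    using finite_choice_set choice_event_sets AE_choice_events_disjoint
    by (intro measure_UNION_AE[symmetric] pairwiseI) (auto simp: fmeasurable_eq_sets)
  then show ?thesis
    by (simp add: UN_choice_event prob_space)
qed

end

locale monotone_random_utility = random_utility +
  assumes utility_mono: "\<And>\<epsilon> j. j \<in> J0 \<Longrightarrow> mono (U \<epsilon> j)"
begin

lemma choice_prob_antimono:
  assumes "j \<in> J0" "\<delta> j = \<delta>' j" "\<And>k. k \<in> J0 \<Longrightarrow> \<delta> k \<le> \<delta>' k"
  shows "choice_prob M U J0 \<delta>' j \<le> choice_prob M U J0 \<delta> j"
proof -
  have "choice_event M U J0 \<delta>' j \<subseteq> choice_event M U J0 \<delta> j"
  proof (unfold choice_event_def, safe)
    fix \<epsilon> k
    assume best: "\<forall>k\<in>J0. U \<epsilon> k (\<delta>' k) \<le> U \<epsilon> j (\<delta>' j)" and k: "k \<in> J0"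
    have "U \<epsilon> k (\<delta> k) \<le> U \<epsilon> k (\<delta>' k)"
      using utility_mono[OF k] assms(3)[OF k] by (rule monoD)
    also have "\<dots> \<le> U \<epsilon> j (\<delta> j)"
      using best k assms(2) by simp
    finally show "U \<epsilon> k (\<delta> k) \<le> U \<epsilon> j (\<delta> j)" .
  qed
  then show ?thesis
    unfolding choice_prob_eq_measure_choice_event
    using assms(1) by (intro finite_measure_mono choice_event_sets)
qed

lemma choice_prob_min:
  assumes le_where_lower: "\<And>k. k \<in> J0 \<Longrightarrow> \<delta>' k < \<delta> k \<Longrightarrow>
      choice_prob M U J0 \<delta> k \<le> choice_prob M U J0 \<delta>' k"
    and "j \<in> J0"
  shows "choice_prob M U J0 (\<lambda>k. min (\<delta> k) (\<delta>' k)) j = choice_prob M U J0 \<delta> j"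
proof -
  let ?m = "\<lambda>k. min (\<delta> k) (\<delta>' k)"
  have dominates: "choice_prob M U J0 \<delta> k \<le> choice_prob M U J0 ?m k" if k: "k \<in> J0" for k
  proof (cases "\<delta>' k < \<delta> k")
    case True
    with k have "choice_prob M U J0 \<delta>' k \<le> choice_prob M U J0 ?m k"
      by (intro choice_prob_antimono) auto
    with le_where_lower[OF k True] show ?thesis
      by linarith
  next
    case False
    with k show ?thesis
      by (intro choice_prob_antimono) auto
  qed
  have "choice_prob M U J0 \<delta> j = choice_prob M U J0 ?m j"
    by (rule sum_mono_inv[OF _ dominates assms(2) finite_choice_set]) (simp add: sum_choice_prob)
  then show ?thesis
    by simp
qed

lemma choice_prob_max:
  assumes le_where_lower: "\<And>k. k \<in> J0 \<Longrightarrow> \<delta>' k < \<delta> k \<Longrightarrow>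
      choice_prob M U J0 \<delta> k \<le> choice_prob M U J0 \<delta>' k"
    and "j \<in> J0"
  shows "choice_prob M U J0 (\<lambda>k. max (\<delta> k) (\<delta>' k)) j = choice_prob M U J0 \<delta>' j"
proof -
  let ?m = "\<lambda>k. max (\<delta> k) (\<delta>' k)"
  have dominated: "choice_prob M U J0 ?m k \<le> choice_prob M U J0 \<delta>' k" if k: "k \<in> J0" for k
  proof (cases "\<delta>' k < \<delta> k")
    case True
    with k have "choice_prob M U J0 ?m k \<le> choice_prob M U J0 \<delta> k"
      by (intro choice_prob_antimono) auto
    with le_where_lower[OF k True] show ?thesis
      by linarith
  next
    case False
    with k show ?thesis
      by (intro choice_prob_antimono) auto
  qed
  show ?thesis
    by (rule sum_mono_inv[OF _ dominated assms(2) finite_choice_set]) (simp add: sum_choice_prob)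
qed

end

theorem theorem2:
  fixes M :: "'w::topological_space measure"
    and U :: "'w \<Rightarrow> nat \<Rightarrow> real \<Rightarrow> real"
    and J :: "nat set"
    and s s' \<delta> \<delta>' :: "nat \<Rightarrow> real"
  assumes finJ: "finite J" and zero_notin: "0 \<notin> J"
    and prob: "prob_space M" and borel_M: "sets M = sets borel"
    and meas: "\<And>j d. j \<in> insert 0 J \<Longrightarrow> (\<lambda>\<epsilon>. U \<epsilon> j d) \<in> borel_measurable M"
    and incr: "\<And>\<epsilon> j. j \<in> insert 0 J \<Longrightarrow> mono (U \<epsilon> j)"
    and cont: "\<And>\<epsilon> j. j \<in> insert 0 J \<Longrightarrow> continuous_on UNIV (U \<epsilon> j)"
    and no_indiff: "\<And>j j' d d'. j \<in> insert 0 J \<Longrightarrow> j' \<in> insert 0 J \<Longrightarrow> j \<noteq> j' \<Longrightarrow>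
        measure M {\<epsilon> \<in> space M. U \<epsilon> j d = U \<epsilon> j' d'} = 0"
    and s_nonneg: "\<And>j. j \<in> insert 0 J \<Longrightarrow> s j \<ge> 0"
    and s_sum: "(\<Sum>j \<in> insert 0 J. s j) = 1"
    and s'_nonneg: "\<And>j. j \<in> insert 0 J \<Longrightarrow> s' j \<ge> 0"
    and s'_sum: "(\<Sum>j \<in> insert 0 J. s' j) = 1"
    and s_le: "\<And>j. j \<in> J \<Longrightarrow> s j \<le> s' j"
    and \<delta>_in: "\<delta> \<in> choice_prob_tilde_inv M U J s"
    and \<delta>'_in: "\<delta>' \<in> choice_prob_tilde_inv M U J s'"
  shows "(\<lambda>j. min (\<delta> j) (\<delta>' j)) \<in> choice_prob_tilde_inv M U J s
       \<and> (\<lambda>j. max (\<delta> j) (\<delta>' j)) \<in> choice_prob_tilde_inv M U J s'"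
proof -
  interpret monotone_random_utility M U "insert 0 J"
    by (intro monotone_random_utility.intro random_utility.intro random_utility_axioms.intro
        monotone_random_utility_axioms.intro prob) (use finJ meas no_indiff incr in auto)
  define d where "d = \<delta>(0 := 0)"
  define d' where "d' = \<delta>'(0 := 0)"
  have shares: "choice_prob M U (insert 0 J) d j = s j" "choice_prob M U (insert 0 J) d' j = s' j"
    if "j \<in> insert 0 J" for j
    using \<delta>_in \<delta>'_in that
    by (auto simp: choice_prob_tilde_inv_def choice_prob_tilde_def d_def d'_def)
  have lower: "choice_prob M U (insert 0 J) d k \<le> choice_prob M U (insert 0 J) d' k"
    if "k \<in> insert 0 J" "d' k < d k" for k
    using that shares s_le by (cases "k = 0") (auto simp: d_def d'_def)
  have "(\<lambda>j. min (\<delta> j) (\<delta>' j))(0 := 0) = (\<lambda>j. min (d j) (d' j))"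
    and "(\<lambda>j. max (\<delta> j) (\<delta>' j))(0 := 0) = (\<lambda>j. max (d j) (d' j))"
    by (auto simp: d_def d'_def)
  with choice_prob_min[OF lower] choice_prob_max[OF lower] shares \<delta>_in \<delta>'_in show ?thesis
    by (auto simp: choice_prob_tilde_inv_def choice_prob_tilde_def PiE_iff extensional_def)
qed

end
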